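(* Let $f:\mathbb{R}^d\to\mathbb{R}$ be a quadratic function (a polynomial of total degree at most $2$) and let $\theta\in\mathbb{R}^d$ be a unit vector. Then, with $\boldsymbol{x}\sim\mathcal{N}(0,I_d)$, $$\overline{\tau}^2_\theta=\theta^{\top}\,\mathbb{E}\biggl[\nabla f\Bigl(\tfrac{\theta\theta^{\top}\boldsymbol{x}}{\sqrt2}+(I-\theta\theta^{\top})\boldsymbol{x}\Bigr)\nabla f\Bigl(\tfrac{\theta\theta^{\top}\boldsymbol{x}}{\sqrt2}+(I-\theta\theta^{\top})\boldsymbol{x}\Bigr)^{\top}\biggr]\theta.$$
   Context: For a unit vector $\theta\in\mathbb{R}^d$ and $f$ with $\mathbb{E}(f(\boldsymbol{x})^2)<\infty$, the Sobol' index of the projection $\theta^\top\boldsymbol{x}$ is $$\overline{\tau}^2_\theta=\frac12\,\mathbb{E}\Bigl[\bigl(f(\boldsymbol{x})-f(\theta\theta^{\top}\boldsymbol{z}+(I-\theta\theta^{\top})\boldsymbol{x})\bigr)^2\Bigr],$$ where $\boldsymbol{x},\boldsymbol{z}\sim\mathcal{N}(0,I_d)$ are independent. Equivalently, it is the total Sobol' index of the first input of $\boldsymbol{x}\mapsto f(\Theta\boldsymbol{x})$ for any orthogonal $\Theta$ whose first column is $\theta$. *)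

theory Defs
  imports "HOL-Probability.Probability"
begin

definition std_gauss :: "(real ^ 'n) measure" where
  "std_gauss = density lborel
     (\<lambda>x. ennreal ((2 * pi) powr (- real CARD('n) / 2) * exp (- (norm x)\<^sup>2 / 2)))"

definition quadratic_fun :: "(real ^ 'n \<Rightarrow> real) \<Rightarrow> bool" where
  "quadratic_fun f \<longleftrightarrow> (\<exists>(A :: real ^ 'n ^ 'n) (b :: real ^ 'n) (c :: real).
     \<forall>x. f x = c + (\<Sum>i\<in>UNIV. b $ i * x $ i)
              + (\<Sum>i\<in>UNIV. \<Sum>j\<in>UNIV. A $ i $ j * x $ i * x $ j))"

definition grad :: "(real ^ 'n \<Rightarrow> real) \<Rightarrow> real ^ 'n \<Rightarrow> real ^ 'n" where
  "grad f x = (SOME g. GDERIV f x :> g)"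

definition sobol_proj :: "(real ^ 'n \<Rightarrow> real) \<Rightarrow> real ^ 'n \<Rightarrow> real" where
  "sobol_proj f \<theta> = 1 / 2 * (\<integral>p. (f (fst p) - f ((\<theta> \<bullet> snd p) *\<^sub>R \<theta> + (fst p - (\<theta> \<bullet> fst p) *\<^sub>R \<theta>)))\<^sup>2
      \<partial>(std_gauss \<Otimes>\<^sub>M std_gauss))"

end

theory Submission
  imports Defs
begin

text \<open>
  For a quadratic \<open>f\<close>, moving along \<open>\<theta>\<close> gives
  \<open>f (x + d\<theta>) = f x + d (\<beta> + v \<bullet> x) + d\<^sup>2 \<alpha>\<close> with \<open>\<theta> \<bullet> v = 2\<alpha>\<close>,
  and \<open>\<theta> \<bullet> \<nabla>f\<close> is affine. Hence both sides are combinations of Gaussian moments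
  of degree at most four of linear forms, which follow coordinatewise from the product structure
  of \<open>N(0, I)\<close> (Isserlis' formula in degree four). Both sides come out as
  \<open>\<beta>\<^sup>2 + v \<bullet> v - (\<theta> \<bullet> v)\<^sup>2 / 2\<close>.
\<close>

section \<open>Moments of the standard Gaussian\<close>

lemma std_gauss_density_eq_prod:
  fixes x :: "real ^ 'n"
  shows "(2 * pi) powr (- real CARD('n) / 2) * exp (- (norm x)\<^sup>2 / 2)
     = (\<Prod>b\<in>Basis. std_normal_density (x \<bullet> b))"
proof -
  have "(norm x)\<^sup>2 = (\<Sum>b\<in>Basis. (x \<bullet> b)\<^sup>2)"
    unfolding power2_norm_eq_inner euclidean_inner[of x x] by (simp add: power2_eq_square)
  then have "exp (- (norm x)\<^sup>2 / 2) = (\<Prod>b\<in>Basis. exp (- (x \<bullet> b)\<^sup>2 / 2))"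
    by (simp add: exp_sum[symmetric] sum_negf sum_divide_distrib)
  moreover have "(2 * pi) powr (- real CARD('n) / 2) = (\<Prod>b\<in>(Basis::(real^'n) set). 1 / sqrt (2 * pi))"
  proof -
    have "(2 * pi) powr (- real CARD('n) / 2) = ((2 * pi) powr (-1/2)) ^ CARD('n)"
      by (simp add: powr_realpow[symmetric] powr_powr)
    also have "\<dots> = (\<Prod>b\<in>(Basis::(real^'n) set). 1 / sqrt (2 * pi))"
      by (simp add: powr_minus_divide powr_half_sqrt[symmetric])
    finally show ?thesis .
  qed
  ultimately show ?thesis
    unfolding std_normal_density_def by (simp add: prod_dividef power_one_over)
qed

lemma has_bochner_integral_std_gauss_prod:
  fixes m :: "real ^ 'n \<Rightarrow> real \<Rightarrow> real"
  assumes [measurable]: "\<And>b. b \<in> Basis \<Longrightarrow> m b \<in> borel_measurable borel"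
    and int: "\<And>b. b \<in> Basis \<Longrightarrow> integrable lborel (\<lambda>y. std_normal_density y * m b y)"
  shows "has_bochner_integral std_gauss (\<lambda>x. \<Prod>b\<in>Basis. m b (x \<bullet> b))
           (\<Prod>b\<in>Basis. \<integral>y. std_normal_density y * m b y \<partial>lborel)"
proof -
  interpret product_sigma_finite "\<lambda>_::real^'n. lborel :: real measure" by standard
  define k where "k b y = std_normal_density y * m b y" for b y
  have [measurable]: "b \<in> Basis \<Longrightarrow> k b \<in> borel_measurable borel" for b
    unfolding k_def by measurable
  have "has_bochner_integral (Pi\<^sub>M Basis (\<lambda>_. lborel)) (\<lambda>f. \<Prod>b\<in>Basis. k b (f b))
           (\<Prod>b\<in>Basis. integral\<^sup>L lborel (k b))"
    using int unfolding k_def[abs_def] has_bochner_integral_iff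
    by (auto intro!: product_integrable_prod product_integral_prod)
  then have "has_bochner_integral (distr (Pi\<^sub>M Basis (\<lambda>_. lborel)) borel (\<lambda>f. \<Sum>b\<in>Basis. f b *\<^sub>R b))
      (\<lambda>x::real^'n. \<Prod>b\<in>Basis. k b (x \<bullet> b)) (\<Prod>b\<in>Basis. integral\<^sup>L lborel (k b))"
    by (intro has_bochner_integral_distr)
       (auto simp: inner_sum_left inner_Basis if_distrib sum.delta cong: if_cong)
  then have "has_bochner_integral lborel
      (\<lambda>x::real^'n. ((2 * pi) powr (- real CARD('n) / 2) * exp (- (norm x)\<^sup>2 / 2)) *\<^sub>R (\<Prod>b\<in>Basis. m b (x \<bullet> b)))
      (\<Prod>b\<in>Basis. integral\<^sup>L lborel (k b))"
    unfolding std_gauss_density_eq_prod by (simp add: lborel_eq[symmetric] k_def prod.distrib)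
  then show ?thesis
    unfolding std_gauss_def k_def[abs_def]
    by (intro has_bochner_integral_density) auto
qed

definition std_normal_moment :: "nat \<Rightarrow> real" where
  "std_normal_moment n = (if even n then fact n / (2 ^ (n div 2) * fact (n div 2)) else 0)"

text \<open>In \<open>Suc\<close> form, as exponents built from sums of \<open>of_bool\<close> simplify to \<open>Suc\<close> numerals.\<close>

lemma std_normal_moment_values [simp]:
  "std_normal_moment 0 = 1" "std_normal_moment (Suc 0) = 0" "std_normal_moment (Suc (Suc 0)) = 1"
  "std_normal_moment (Suc (Suc (Suc 0))) = 0" "std_normal_moment (Suc (Suc (Suc (Suc 0)))) = 3"
  by (simp_all add: std_normal_moment_def)

lemma has_bochner_integral_std_normal_moment:
  "has_bochner_integral lborel (\<lambda>y. std_normal_density y * y ^ n) (std_normal_moment n)"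
proof (cases "even n")
  case True
  then obtain k where "n = 2 * k" by blast
  then show ?thesis using std_normal_moment_even[of k] by (simp add: std_normal_moment_def)
next
  case False
  then obtain k where "n = 2 * k + 1" using oddE by blast
  then show ?thesis using std_normal_moment_odd[of k] by (simp add: std_normal_moment_def)
qed

lemma has_bochner_integral_std_gauss_monomial:
  fixes c :: "real ^ 'n \<Rightarrow> nat"
  shows "has_bochner_integral std_gauss (\<lambda>x. \<Prod>b\<in>Basis. (x \<bullet> b) ^ c b) (\<Prod>b\<in>Basis. std_normal_moment (c b))"
proof -
  have "has_bochner_integral std_gauss (\<lambda>x. \<Prod>b\<in>Basis. (\<lambda>y. y ^ c b) (x \<bullet> b))
           (\<Prod>b\<in>Basis. \<integral>y. std_normal_density y * (\<lambda>y. y ^ c b) y \<partial>lborel)"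
    using has_bochner_integral_std_normal_moment
    by (intro has_bochner_integral_std_gauss_prod) (auto simp: integrable.simps)
  then show ?thesis
    using has_bochner_integral_integral_eq[OF has_bochner_integral_std_normal_moment] by simp
qed

lemma prod_Basis_power_of_bool:
  fixes y :: "real ^ 'n \<Rightarrow> real"
  assumes "b1 \<in> Basis"
  shows "(\<Prod>b\<in>Basis. y b ^ of_bool (b = b1)) = y b1"
proof -
  have "(\<Prod>b\<in>Basis. y b ^ of_bool (b = b1)) = (\<Prod>b\<in>Basis. if b = b1 then y b else 1)"
    by (intro prod.cong) auto
  then show ?thesis
    using assms by (simp add: prod.delta)
qed

lemma prod_std_normal_moment_restrict:
  fixes c :: "real ^ 'n \<Rightarrow> nat"
  assumes "S \<subseteq> Basis" "\<And>b. b \<in> Basis \<Longrightarrow> b \<notin> S \<Longrightarrow> c b = 0"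
  shows "(\<Prod>b\<in>Basis. std_normal_moment (c b)) = (\<Prod>b\<in>S. std_normal_moment (c b))"
  using assms by (intro prod.mono_neutral_right) auto

lemma has_bochner_integral_std_gauss_odd_monomial:
  fixes c :: "real ^ 'n \<Rightarrow> nat"
  assumes "odd (\<Sum>b\<in>Basis. c b)"
  shows "has_bochner_integral std_gauss (\<lambda>x. \<Prod>b\<in>Basis. (x \<bullet> b) ^ c b) 0"
proof -
  obtain b where "b \<in> Basis" "odd (c b)"
    using assms dvd_sum[of Basis 2 c] by blast
  then have zero: "(\<Prod>b\<in>Basis. std_normal_moment (c b)) = 0"
    by (intro prod_zero) (auto simp: std_normal_moment_def)
  show ?thesis
    using has_bochner_integral_std_gauss_monomial[of c] unfolding zero .
qed

lemma sum_Basis_of_bool_eq: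
  "b1 \<in> Basis \<Longrightarrow> (\<Sum>b\<in>(Basis::(real^'n) set). of_bool (b = b1) :: nat) = 1"
  by (simp add: of_bool_def sum.delta)

lemma std_gauss_Basis_moment1:
  fixes b1 :: "real ^ 'n"
  assumes "b1 \<in> Basis"
  shows "has_bochner_integral std_gauss (\<lambda>x. x \<bullet> b1) 0"
  using has_bochner_integral_std_gauss_odd_monomial[of "\<lambda>b. of_bool (b = b1)"] assms
  by (simp add: prod_Basis_power_of_bool sum_Basis_of_bool_eq)

lemma std_gauss_Basis_moment3:
  fixes b1 b2 b3 :: "real ^ 'n"
  assumes "b1 \<in> Basis" "b2 \<in> Basis" "b3 \<in> Basis"
  shows "has_bochner_integral std_gauss (\<lambda>x. (x \<bullet> b1) * (x \<bullet> b2) * (x \<bullet> b3)) 0"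
  using has_bochner_integral_std_gauss_odd_monomial
    [of "\<lambda>b. of_bool (b = b1) + of_bool (b = b2) + of_bool (b = b3)"] assms
  by (simp add: power_add prod.distrib prod_Basis_power_of_bool sum.distrib sum_Basis_of_bool_eq)

lemma std_gauss_Basis_moment2:
  fixes b1 b2 :: "real ^ 'n"
  assumes B: "b1 \<in> Basis" "b2 \<in> Basis"
  shows "has_bochner_integral std_gauss (\<lambda>x. (x \<bullet> b1) * (x \<bullet> b2)) (of_bool (b1 = b2))"
proof -
  define c where "c b = of_bool (b = b1) + (of_bool (b = b2) :: nat)" for b :: "real^'n"
  have "(\<Prod>b\<in>Basis. std_normal_moment (c b)) = (\<Prod>b\<in>{b1,b2}. std_normal_moment (c b))"
    using B by (intro prod_std_normal_moment_restrict) (auto simp: c_def)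
  also have "\<dots> = of_bool (b1 = b2)"
    unfolding c_def by (cases "b1 = b2") (simp_all add: insert_absorb)
  finally show ?thesis
    using has_bochner_integral_std_gauss_monomial[of c] B
    by (simp add: c_def power_add prod.distrib prod_Basis_power_of_bool)
qed

lemma std_gauss_Basis_moment4:
  fixes b1 b2 b3 b4 :: "real ^ 'n"
  assumes B: "b1 \<in> Basis" "b2 \<in> Basis" "b3 \<in> Basis" "b4 \<in> Basis"
  shows "has_bochner_integral std_gauss (\<lambda>x. (x \<bullet> b1) * (x \<bullet> b2) * (x \<bullet> b3) * (x \<bullet> b4))
     (of_bool (b1 = b2) * of_bool (b3 = b4) + of_bool (b1 = b3) * of_bool (b2 = b4)
      + of_bool (b1 = b4) * of_bool (b2 = b3))"
proof -
  define c where
    "c b = of_bool (b = b1) + of_bool (b = b2) + of_bool (b = b3) + (of_bool (b = b4) :: nat)"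
    for b :: "real^'n"
  have "(\<Prod>b\<in>Basis. std_normal_moment (c b)) = (\<Prod>b\<in>{b1,b2,b3,b4}. std_normal_moment (c b))"
    using B by (intro prod_std_normal_moment_restrict) (auto simp: c_def)
  also have "\<dots> = of_bool (b1 = b2) * of_bool (b3 = b4) + of_bool (b1 = b3) * of_bool (b2 = b4)
      + of_bool (b1 = b4) * of_bool (b2 = b3)"
    unfolding c_def
    by (cases "b1 = b2"; cases "b1 = b3"; cases "b1 = b4"; cases "b2 = b3"; cases "b2 = b4";
        cases "b3 = b4") (simp_all add: insert_absorb)
  finally show ?thesis
    using has_bochner_integral_std_gauss_monomial[of c] B
    by (simp add: c_def power_add prod.distrib prod_Basis_power_of_bool)
qed

lemma sum_product3:
  fixes f g h :: "'a \<Rightarrow> real"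
  shows "(\<Sum>i\<in>A. f i) * (\<Sum>j\<in>A. g j) * (\<Sum>k\<in>A. h k)
    = (\<Sum>i\<in>A. \<Sum>j\<in>A. \<Sum>k\<in>A. f i * g j * h k)"
proof -
  have "(\<Sum>i\<in>A. f i) * (\<Sum>j\<in>A. g j) * (\<Sum>k\<in>A. h k)
      = (\<Sum>i\<in>A. \<Sum>j\<in>A. f i * g j) * (\<Sum>k\<in>A. h k)"
    by (simp only: sum_product)
  also have "\<dots> = (\<Sum>i\<in>A. (\<Sum>j\<in>A. f i * g j) * (\<Sum>k\<in>A. h k))"
    by (rule sum_distrib_right)
  also have "\<dots> = (\<Sum>i\<in>A. \<Sum>j\<in>A. \<Sum>k\<in>A. f i * g j * h k)"
    by (simp only: sum_product)
  finally show ?thesis .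
qed

lemma sum_product4:
  fixes f g h l :: "'a \<Rightarrow> real"
  shows "(\<Sum>i\<in>A. f i) * (\<Sum>j\<in>A. g j) * (\<Sum>k\<in>A. h k) * (\<Sum>m\<in>A. l m)
    = (\<Sum>i\<in>A. \<Sum>j\<in>A. \<Sum>k\<in>A. \<Sum>m\<in>A. f i * g j * h k * l m)"
proof -
  have "(\<Sum>i\<in>A. f i) * (\<Sum>j\<in>A. g j) * (\<Sum>k\<in>A. h k) * (\<Sum>m\<in>A. l m)
      = (\<Sum>i\<in>A. \<Sum>j\<in>A. \<Sum>k\<in>A. f i * g j * h k) * (\<Sum>m\<in>A. l m)"
    by (simp only: sum_product3)
  also have "\<dots> = (\<Sum>i\<in>A. (\<Sum>j\<in>A. \<Sum>k\<in>A. f i * g j * h k) * (\<Sum>m\<in>A. l m))"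
    by (rule sum_distrib_right)
  also have "\<dots> = (\<Sum>i\<in>A. \<Sum>j\<in>A. (\<Sum>k\<in>A. f i * g j * h k) * (\<Sum>m\<in>A. l m))"
    by (simp only: sum_distrib_right)
  also have "\<dots> = (\<Sum>i\<in>A. \<Sum>j\<in>A. \<Sum>k\<in>A. \<Sum>m\<in>A. f i * g j * h k * l m)"
    by (simp only: sum_product)
  finally show ?thesis .
qed

lemma sum_Basis_pairings:
  fixes a1 a2 a3 a4 :: "real ^ 'n"
  shows "(\<Sum>b1\<in>Basis. \<Sum>b2\<in>Basis. \<Sum>b3\<in>Basis. \<Sum>b4\<in>Basis.
     (a1 \<bullet> b1) * (a2 \<bullet> b2) * (a3 \<bullet> b3) * (a4 \<bullet> b4) *
     (of_bool (b1 = b2) * of_bool (b3 = b4) + of_bool (b1 = b3) * of_bool (b2 = b4)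
      + of_bool (b1 = b4) * of_bool (b2 = b3)))
   = (a1 \<bullet> a2) * (a3 \<bullet> a4) + (a1 \<bullet> a3) * (a2 \<bullet> a4) + (a1 \<bullet> a4) * (a2 \<bullet> a3)"
proof -
  have mult_of_bool: "(x::real) * of_bool P = (if P then x else 0)" for x P
    by simp
  have sum_if: "(\<Sum>x\<in>A. if P then f x else 0) = (if P then (\<Sum>x\<in>A. f x) else (0::real))" for A P f
    by simp
  show ?thesis
    apply (simp only: distrib_left sum.distrib mult.assoc[symmetric])
    apply (simp only: mult_of_bool)
    apply (simp add: sum_if sum.delta sum.delta' cong: sum.cong_simp)
    apply (simp only: euclidean_inner[of a1 a2] euclidean_inner[of a3 a4] euclidean_inner[of a1 a3]
        euclidean_inner[of a2 a4] euclidean_inner[of a1 a4] euclidean_inner[of a2 a3] sum_product)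
    apply (simp add: ac_simps)
    done
qed

lemmas has_bochner_integral_congI = has_bochner_integral_cong[THEN iffD1, OF refl, rotated 2]

lemma has_bochner_integral_std_gauss_one: "has_bochner_integral std_gauss (\<lambda>x::real^'n. 1::real) 1"
  using has_bochner_integral_std_gauss_monomial[of "\<lambda>_. 0"] by simp

lemma std_gauss_inner_moment1: "has_bochner_integral std_gauss (\<lambda>x. (a::real^'n) \<bullet> x) 0"
proof -
  have "has_bochner_integral std_gauss (\<lambda>x. \<Sum>b\<in>Basis. (a \<bullet> b) * (x \<bullet> b))
          (\<Sum>b\<in>(Basis::(real^'n) set). (a \<bullet> b) * 0)"
    by (intro has_bochner_integral_sum has_bochner_integral_mult_right std_gauss_Basis_moment1)
  then show ?thesis
    by (rule has_bochner_integral_congI) (simp_all add: euclidean_inner[symmetric])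
qed

lemma std_gauss_inner_moment2:
  "has_bochner_integral std_gauss (\<lambda>x. ((a1::real^'n) \<bullet> x) * (a2 \<bullet> x)) (a1 \<bullet> a2)"
proof -
  have "has_bochner_integral std_gauss
      (\<lambda>x. \<Sum>b1\<in>Basis. \<Sum>b2\<in>Basis. ((a1 \<bullet> b1) * (a2 \<bullet> b2)) * ((x \<bullet> b1) * (x \<bullet> b2)))
      (\<Sum>b1\<in>(Basis::(real^'n) set). \<Sum>b2\<in>Basis. ((a1 \<bullet> b1) * (a2 \<bullet> b2)) * of_bool (b1 = b2))"
    by (intro has_bochner_integral_sum has_bochner_integral_mult_right std_gauss_Basis_moment2)
  then show ?thesis
  proof (rule has_bochner_integral_congI)
    show "(\<Sum>b1\<in>Basis. \<Sum>b2\<in>Basis. ((a1 \<bullet> b1) * (a2 \<bullet> b2)) * ((x \<bullet> b1) * (x \<bullet> b2)))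
        = (a1 \<bullet> x) * (a2 \<bullet> x)" for x
      unfolding euclidean_inner[of a1 x] euclidean_inner[of a2 x] sum_product
      by (simp add: ac_simps)
    show "(\<Sum>b1\<in>(Basis::(real^'n) set). \<Sum>b2\<in>Basis. ((a1 \<bullet> b1) * (a2 \<bullet> b2)) * of_bool (b1 = b2))
        = a1 \<bullet> a2"
      unfolding euclidean_inner[of a1 a2] by (simp add: if_distrib sum.delta cong: if_cong)
  qed
qed

lemma std_gauss_inner_moment3:
  "has_bochner_integral std_gauss (\<lambda>x. ((a1::real^'n) \<bullet> x) * (a2 \<bullet> x) * (a3 \<bullet> x)) 0"
proof -
  have "has_bochner_integral std_gauss
      (\<lambda>x. \<Sum>b1\<in>Basis. \<Sum>b2\<in>Basis. \<Sum>b3\<in>Basis.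
         ((a1 \<bullet> b1) * (a2 \<bullet> b2) * (a3 \<bullet> b3)) * ((x \<bullet> b1) * (x \<bullet> b2) * (x \<bullet> b3)))
      (\<Sum>b1\<in>(Basis::(real^'n) set). \<Sum>b2\<in>Basis. \<Sum>b3\<in>Basis. ((a1 \<bullet> b1) * (a2 \<bullet> b2) * (a3 \<bullet> b3)) * 0)"
    by (intro has_bochner_integral_sum has_bochner_integral_mult_right std_gauss_Basis_moment3)
  then show ?thesis
  proof (rule has_bochner_integral_congI)
    show "(\<Sum>b1\<in>Basis. \<Sum>b2\<in>Basis. \<Sum>b3\<in>Basis.
          ((a1 \<bullet> b1) * (a2 \<bullet> b2) * (a3 \<bullet> b3)) * ((x \<bullet> b1) * (x \<bullet> b2) * (x \<bullet> b3)))
        = (a1 \<bullet> x) * (a2 \<bullet> x) * (a3 \<bullet> x)" for x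
      unfolding euclidean_inner[of a1 x] euclidean_inner[of a2 x] euclidean_inner[of a3 x] sum_product3
      by (simp add: ac_simps)
  qed simp
qed

lemma std_gauss_inner_moment4:
  "has_bochner_integral std_gauss (\<lambda>x. ((a1::real^'n) \<bullet> x) * (a2 \<bullet> x) * (a3 \<bullet> x) * (a4 \<bullet> x))
     ((a1 \<bullet> a2) * (a3 \<bullet> a4) + (a1 \<bullet> a3) * (a2 \<bullet> a4) + (a1 \<bullet> a4) * (a2 \<bullet> a3))"
proof -
  have "has_bochner_integral std_gauss
      (\<lambda>x. \<Sum>b1\<in>Basis. \<Sum>b2\<in>Basis. \<Sum>b3\<in>Basis. \<Sum>b4\<in>Basis.
         ((a1 \<bullet> b1) * (a2 \<bullet> b2) * (a3 \<bullet> b3) * (a4 \<bullet> b4))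
         * ((x \<bullet> b1) * (x \<bullet> b2) * (x \<bullet> b3) * (x \<bullet> b4)))
      (\<Sum>b1\<in>(Basis::(real^'n) set). \<Sum>b2\<in>Basis. \<Sum>b3\<in>Basis. \<Sum>b4\<in>Basis.
         (a1 \<bullet> b1) * (a2 \<bullet> b2) * (a3 \<bullet> b3) * (a4 \<bullet> b4) *
         (of_bool (b1 = b2) * of_bool (b3 = b4) + of_bool (b1 = b3) * of_bool (b2 = b4)
          + of_bool (b1 = b4) * of_bool (b2 = b3)))"
    by (intro has_bochner_integral_sum has_bochner_integral_mult_right std_gauss_Basis_moment4)
  then show ?thesis
  proof (rule has_bochner_integral_congI)
    show "(\<Sum>b1\<in>Basis. \<Sum>b2\<in>Basis. \<Sum>b3\<in>Basis. \<Sum>b4\<in>Basis.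
          ((a1 \<bullet> b1) * (a2 \<bullet> b2) * (a3 \<bullet> b3) * (a4 \<bullet> b4))
          * ((x \<bullet> b1) * (x \<bullet> b2) * (x \<bullet> b3) * (x \<bullet> b4)))
        = (a1 \<bullet> x) * (a2 \<bullet> x) * (a3 \<bullet> x) * (a4 \<bullet> x)" for x
      unfolding euclidean_inner[of a1 x] euclidean_inner[of a2 x] euclidean_inner[of a3 x]
        euclidean_inner[of a4 x] sum_product4
      by (simp add: ac_simps)
  qed (rule sum_Basis_pairings)
qed

lemma std_gauss_affine_product:
  fixes u v :: "real ^ 'n"
  shows "has_bochner_integral std_gauss (\<lambda>x. (a + u \<bullet> x) * (b + v \<bullet> x)) (a * b + u \<bullet> v)"
proof -
  have "has_bochner_integral std_gauss (\<lambda>x. a * b * 1 + b * (u \<bullet> x) + a * (v \<bullet> x) + (u \<bullet> x) * (v \<bullet> x))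
      (a * b * 1 + b * 0 + a * 0 + u \<bullet> v)"
    by (intro has_bochner_integral_add has_bochner_integral_mult_right has_bochner_integral_std_gauss_one
        std_gauss_inner_moment1 std_gauss_inner_moment2)
  then show ?thesis
    by (rule has_bochner_integral_congI) (simp_all add: algebra_simps)
qed

lemma std_gauss_bivariate_quartic:
  fixes u v :: "real ^ 'n"
  shows "has_bochner_integral std_gauss (\<lambda>x. k00 + k10*(u\<bullet>x) + k01*(v\<bullet>x)
      + k20*(u\<bullet>x)^2 + k11*((u\<bullet>x)*(v\<bullet>x)) + k02*(v\<bullet>x)^2
      + k30*(u\<bullet>x)^3 + k21*((u\<bullet>x)^2*(v\<bullet>x)) + k12*((u\<bullet>x)*(v\<bullet>x)^2) + k03*(v\<bullet>x)^3
      + k40*(u\<bullet>x)^4 + k31*((u\<bullet>x)^3*(v\<bullet>x)) + k22*((u\<bullet>x)^2*(v\<bullet>x)^2)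
      + k13*((u\<bullet>x)*(v\<bullet>x)^3) + k04*(v\<bullet>x)^4)
    (k00 + k20*(u\<bullet>u) + k11*(u\<bullet>v) + k02*(v\<bullet>v) + 3*k40*(u\<bullet>u)^2 + 3*k31*(u\<bullet>u)*(u\<bullet>v)
      + k22*((u\<bullet>u)*(v\<bullet>v) + 2*(u\<bullet>v)^2) + 3*k13*(u\<bullet>v)*(v\<bullet>v) + 3*k04*(v\<bullet>v)^2)"
proof -
  note m0 = has_bochner_integral_std_gauss_one and m1 = std_gauss_inner_moment1
    and m2 = std_gauss_inner_moment2 and m3 = std_gauss_inner_moment3 and m4 = std_gauss_inner_moment4
  have "has_bochner_integral std_gauss (\<lambda>x. k00*1 + k10*(u\<bullet>x) + k01*(v\<bullet>x)
      + k20*((u\<bullet>x)*(u\<bullet>x)) + k11*((u\<bullet>x)*(v\<bullet>x)) + k02*((v\<bullet>x)*(v\<bullet>x))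
      + k30*((u\<bullet>x)*(u\<bullet>x)*(u\<bullet>x)) + k21*((u\<bullet>x)*(u\<bullet>x)*(v\<bullet>x))
      + k12*((u\<bullet>x)*(v\<bullet>x)*(v\<bullet>x)) + k03*((v\<bullet>x)*(v\<bullet>x)*(v\<bullet>x))
      + k40*((u\<bullet>x)*(u\<bullet>x)*(u\<bullet>x)*(u\<bullet>x)) + k31*((u\<bullet>x)*(u\<bullet>x)*(u\<bullet>x)*(v\<bullet>x))
      + k22*((u\<bullet>x)*(u\<bullet>x)*(v\<bullet>x)*(v\<bullet>x)) + k13*((u\<bullet>x)*(v\<bullet>x)*(v\<bullet>x)*(v\<bullet>x))
      + k04*((v\<bullet>x)*(v\<bullet>x)*(v\<bullet>x)*(v\<bullet>x)))
    (k00*1 + k10*0 + k01*0 + k20*(u\<bullet>u) + k11*(u\<bullet>v) + k02*(v\<bullet>v) + k30*0 + k21*0 + k12*0 + k03*0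
      + k40*((u\<bullet>u)*(u\<bullet>u) + (u\<bullet>u)*(u\<bullet>u) + (u\<bullet>u)*(u\<bullet>u))
      + k31*((u\<bullet>u)*(u\<bullet>v) + (u\<bullet>u)*(u\<bullet>v) + (u\<bullet>v)*(u\<bullet>u))
      + k22*((u\<bullet>u)*(v\<bullet>v) + (u\<bullet>v)*(u\<bullet>v) + (u\<bullet>v)*(u\<bullet>v))
      + k13*((u\<bullet>v)*(v\<bullet>v) + (u\<bullet>v)*(v\<bullet>v) + (u\<bullet>v)*(v\<bullet>v))
      + k04*((v\<bullet>v)*(v\<bullet>v) + (v\<bullet>v)*(v\<bullet>v) + (v\<bullet>v)*(v\<bullet>v)))"
    by (intro has_bochner_integral_add has_bochner_integral_mult_right m0 m1 m2 m3 m4)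
  then show ?thesis
    by (rule has_bochner_integral_congI)
       (simp_all add: power2_eq_square power3_eq_cube power4_eq_xxxx algebra_simps)
qed

lemma prob_space_std_gauss: "prob_space (std_gauss :: (real^'n) measure)"
proof (rule prob_spaceI)
  have "integrable (std_gauss :: (real^'n) measure) (\<lambda>x. 1::real)"
    and "measure (std_gauss :: (real^'n) measure) (space std_gauss) = 1"
    using has_bochner_integral_std_gauss_one by (auto simp: has_bochner_integral_iff)
  then show "emeasure (std_gauss :: (real^'n) measure) (space std_gauss) = 1"
    by (simp add: integrable_iff_bounded less_top[symmetric] emeasure_eq_ennreal_measure)
qed

lemma has_bochner_integral_pair_mult:
  fixes g :: "'a \<Rightarrow> real" and h :: "'b \<Rightarrow> real"
  assumes "sigma_finite_measure M" "sigma_finite_measure N"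
    and g: "has_bochner_integral M g I" and h: "has_bochner_integral N h J"
  shows "has_bochner_integral (M \<Otimes>\<^sub>M N) (\<lambda>p. g (fst p) * h (snd p)) (I * J)"
proof -
  interpret pair_sigma_finite M N
    using assms(1,2) by (rule pair_sigma_finite.intro)
  have ig: "integrable M g" and vg: "integral\<^sup>L M g = I"
    and ih: "integrable N h" and vh: "integral\<^sup>L N h = J"
    using g h by (auto simp: has_bochner_integral_iff)
  have [measurable]: "g \<in> borel_measurable M" "h \<in> borel_measurable N"
    using ig ih by auto
  have int: "integrable (M \<Otimes>\<^sub>M N) (\<lambda>p. g (fst p) * h (snd p))"
  proof (rule Fubini_integrable)
    have "integrable M (\<lambda>x. norm (g x) * (\<integral>y. norm (h y) \<partial>N))"
      using ig by (intro integrable_mult_left integrable_norm)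
    then show "integrable M (\<lambda>x. \<integral>y. norm (g (fst (x, y)) * h (snd (x, y))) \<partial>N)"
      by (simp add: abs_mult)
    show "AE x in M. integrable N (\<lambda>y. g (fst (x, y)) * h (snd (x, y)))"
      using ih by simp
  qed measurable
  have "integral\<^sup>L (M \<Otimes>\<^sub>M N) (\<lambda>p. g (fst p) * h (snd p)) = (\<integral>x. (\<integral>y. g x * h y \<partial>N) \<partial>M)"
    using integral_fst'[OF int] by simp
  also have "\<dots> = I * J"
    by (simp add: vh vg)
  finally show ?thesis
    using int by (simp add: has_bochner_integral_iff)
qed

lemma integrable_vec_lambda:
  fixes F :: "'a \<Rightarrow> 'k::finite \<Rightarrow> 'b::euclidean_space"
  assumes "\<And>i. integrable M (\<lambda>x. F x i)"
  shows "integrable M (\<lambda>x. \<chi> i. F x i)"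
proof -
  have "bounded_linear (\<lambda>y::'b. axis i y :: 'b^'k)" for i
    unfolding linear_conv_bounded_linear[symmetric] by (rule linearI) (simp_all add: vec_eq_iff axis_def)
  then have "integrable M (\<lambda>x. axis i (F x i) :: 'b^'k)" for i
    using assms by (rule integrable_bounded_linear)
  then have "integrable M (\<lambda>x. \<Sum>i\<in>UNIV. axis i (F x i) :: 'b^'k)"
    by (rule Bochner_Integration.integrable_sum)
  moreover have "(\<chi> i. F x i) = (\<Sum>i\<in>UNIV. axis i (F x i))" for x
    by (simp add: vec_eq_iff axis_def if_distrib sum.delta' cong: if_cong)
  ultimately show ?thesis
    by simp
qed

section \<open>Quadratic functions\<close>

lemma quadratic_fun_normal_form:
  assumes "quadratic_fun f"
  obtains c :: real and b :: "real^'n" and A :: "real^'n^'n"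
  where "\<And>x. f x = c + b \<bullet> x + x \<bullet> (A *v x)"
proof -
  from assms obtain A :: "real^'n^'n" and b :: "real^'n" and c :: real where
    f: "\<And>x. f x = c + (\<Sum>i\<in>UNIV. b $ i * x $ i) + (\<Sum>i\<in>UNIV. \<Sum>j\<in>UNIV. A $ i $ j * x $ i * x $ j)"
    unfolding quadratic_fun_def by blast
  have "f x = c + b \<bullet> x + x \<bullet> (A *v x)" for x
    unfolding f by (simp add: inner_vec_def matrix_vector_mult_def sum_distrib_left ac_simps)
  then show ?thesis
    by (rule that)
qed

lemma gderiv_unique: "GDERIV f x :> g \<Longrightarrow> GDERIV f x :> g' \<Longrightarrow> g = g'"
proof -
  assume "GDERIV f x :> g" "GDERIV f x :> g'"
  then have "(\<lambda>h. h \<bullet> g) = (\<lambda>h. h \<bullet> g')"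
    unfolding gderiv_def by (rule has_derivative_unique)
  then have "(g - g') \<bullet> (g - g') = 0"
    by (metis inner_diff_left inner_diff_right inner_commute diff_self)
  then show "g = g'"
    by simp
qed

lemma grad_quadratic:
  fixes A :: "real^'n^'n"
  assumes f: "\<And>x. f x = c + b \<bullet> x + x \<bullet> (A *v x)"
  shows "grad f y = b + (A + transpose A) *v y"
proof -
  have "GDERIV f y :> (b + (A + transpose A) *v y)"
    unfolding gderiv_def f[abs_def]
  proof (rule has_derivative_eq_rhs)
    show "((\<lambda>x. c + b \<bullet> x + x \<bullet> (A *v x)) has_derivative
        (\<lambda>h. 0 + b \<bullet> h + (y \<bullet> (A *v h) + h \<bullet> (A *v y)))) (at y)"
      by (intro derivative_intros bounded_linear_imp_has_derivative matrix_vector_mul_bounded_linear)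
    show "(\<lambda>h. 0 + b \<bullet> h + (y \<bullet> (A *v h) + h \<bullet> (A *v y))) = (\<lambda>h. h \<bullet> (b + (A + transpose A) *v y))"
      by (rule ext) (simp add: matrix_vector_mult_add_rdistrib inner_add_right
          dot_lmul_matrix[symmetric] inner_commute)
  qed
  then show ?thesis
    unfolding grad_def by (metis gderiv_unique someI)
qed

lemma quadratic_shift:
  fixes A :: "real^'n^'n"
  assumes f: "\<And>x. f x = c + b \<bullet> x + x \<bullet> (A *v x)"
  shows "f (x + d *\<^sub>R \<theta>) = f x + d * (\<theta> \<bullet> b + (\<theta> v* (A + transpose A)) \<bullet> x) + d\<^sup>2 * (\<theta> \<bullet> (A *v \<theta>))"
proof -
  have "(\<theta> v* (A + transpose A)) \<bullet> x = \<theta> \<bullet> (A *v x) + \<theta> \<bullet> (transpose A *v x)"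
    by (simp only: dot_lmul_matrix matrix_vector_mult_add_rdistrib inner_add_right)
  also have "\<theta> \<bullet> (transpose A *v x) = x \<bullet> (A *v \<theta>)"
    by (simp add: inner_commute[of \<theta>] dot_lmul_matrix)
  finally show ?thesis
    unfolding f by (simp add: matrix_vector_right_distrib matrix_vector_mult_scaleR inner_add_left
        inner_add_right power2_eq_square algebra_simps inner_commute[of b])
qed

lemma sobol_proj_eq_of_shift:
  fixes f :: "real^'n \<Rightarrow> real" and \<theta> v :: "real^'n"
  assumes shift: "\<And>x d. f (x + d *\<^sub>R \<theta>) = f x + d * (\<beta> + v \<bullet> x) + d\<^sup>2 * \<alpha>"
    and \<theta>: "\<theta> \<bullet> \<theta> = 1"
  shows "sobol_proj f \<theta> = \<beta>\<^sup>2 + v \<bullet> v - (\<theta> \<bullet> v)\<^sup>2 / 2"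
proof -
  have v: "\<theta> \<bullet> v = 2 * \<alpha>"
  proof -
    have "f (0 + 2 *\<^sub>R \<theta>) = f ((0 + 1 *\<^sub>R \<theta>) + 1 *\<^sub>R \<theta>)"
      by (simp add: scaleR_2)
    then show ?thesis
      using shift[of 0 2] shift[of 0 1] shift[of "0 + 1 *\<^sub>R \<theta>" 1]
      by (simp add: inner_commute power2_eq_square algebra_simps)
  qed
  have integrand: "(f x - f ((\<theta> \<bullet> z) *\<^sub>R \<theta> + (x - (\<theta> \<bullet> x) *\<^sub>R \<theta>)))\<^sup>2
      = ((\<theta> \<bullet> z - \<theta> \<bullet> x) * (\<beta> + v \<bullet> x) + (\<theta> \<bullet> z - \<theta> \<bullet> x)\<^sup>2 * \<alpha>)\<^sup>2" for x z
  proof -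
    have "(\<theta> \<bullet> z) *\<^sub>R \<theta> + (x - (\<theta> \<bullet> x) *\<^sub>R \<theta>) = x + (\<theta> \<bullet> z - \<theta> \<bullet> x) *\<^sub>R \<theta>"
      by (simp add: algebra_simps)
    then show ?thesis
      by (simp only: shift) (simp add: power2_eq_square algebra_simps)
  qed
  note pair = has_bochner_integral_pair_mult[OF
      prob_space_imp_sigma_finite[OF prob_space_std_gauss] prob_space_imp_sigma_finite[OF prob_space_std_gauss]]
  note quartic = std_gauss_bivariate_quartic[where u = \<theta> and v = v]
  \<comment> \<open>The integrand is a polynomial in \<open>\<theta> \<bullet> z\<close> of degree four; the quartics below are its
    coefficients as polynomials in \<open>\<theta> \<bullet> x\<close> and \<open>v \<bullet> x\<close>.\<close>
  have "has_bochner_integral (std_gauss \<Otimes>\<^sub>M std_gauss)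
      (\<lambda>p. (f (fst p) - f ((\<theta> \<bullet> snd p) *\<^sub>R \<theta> + (fst p - (\<theta> \<bullet> fst p) *\<^sub>R \<theta>)))\<^sup>2)
      (2 * \<beta>\<^sup>2 + 2 * (v \<bullet> v) - (\<theta> \<bullet> v)\<^sup>2)"
  proof (rule has_bochner_integral_congI[OF has_bochner_integral_add[OF has_bochner_integral_add[OF
          has_bochner_integral_add[OF has_bochner_integral_add[OF
      pair[OF quartic[of 0 0 0 "\<beta>\<^sup>2" 0 0 "-2*\<alpha>*\<beta>" "2*\<beta>" 0 0 "\<alpha>\<^sup>2" "-2*\<alpha>" 1 0 0]
        has_bochner_integral_std_gauss_one]
      pair[OF quartic[of 0 "-2*\<beta>\<^sup>2" 0 "6*\<alpha>*\<beta>" "-4*\<beta>" 0 "-4*\<alpha>\<^sup>2" "6*\<alpha>" "-2" 0 0 0 0 0 0]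
        std_gauss_inner_moment1[of \<theta>]]]
      pair[OF quartic[of "\<beta>\<^sup>2" "-6*\<alpha>*\<beta>" "2*\<beta>" "6*\<alpha>\<^sup>2" "-6*\<alpha>" 1 0 0 0 0 0 0 0 0 0]
        std_gauss_inner_moment2[of \<theta> \<theta>]]]
      pair[OF quartic[of "2*\<alpha>*\<beta>" "-4*\<alpha>\<^sup>2" "2*\<alpha>" 0 0 0 0 0 0 0 0 0 0 0 0]
        std_gauss_inner_moment3[of \<theta> \<theta> \<theta>]]]
      pair[OF quartic[of "\<alpha>\<^sup>2" 0 0 0 0 0 0 0 0 0 0 0 0 0 0]
        std_gauss_inner_moment4[of \<theta> \<theta> \<theta> \<theta>]]]], goal_cases)
    case (1 p)
    obtain x z where "p = (x, z)"
      by fastforce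
    then show ?case
      unfolding integrand by (simp add: power2_eq_square power3_eq_cube power4_eq_xxxx algebra_simps)
  next
    case 2
    show ?case
      by (simp add: \<theta> v power2_eq_square algebra_simps)
  qed
  then show ?thesis
    unfolding sobol_proj_def by (simp add: has_bochner_integral_integral_eq)
qed

lemma quadratic_form_outer_product:
  fixes g \<theta> :: "real^'n"
  shows "\<theta> \<bullet> ((\<chi> i j. g $ i * g $ j) *v \<theta>) = (\<theta> \<bullet> g)\<^sup>2"
  by (simp add: inner_vec_def matrix_vector_mult_def power2_eq_square sum_product sum_distrib_left ac_simps)

lemma projected_grad_moment_eq_of_affine_grad:
  fixes f :: "real^'n \<Rightarrow> real" and S :: "real^'n^'n"
  assumes grad: "\<And>y. grad f y = b + S *v y" and \<theta>: "\<theta> \<bullet> \<theta> = 1"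
  shows "\<theta> \<bullet> ((\<integral>x. (let y = ((\<theta> \<bullet> x) / sqrt 2) *\<^sub>R \<theta> + (x - (\<theta> \<bullet> x) *\<^sub>R \<theta>)
                  in (\<chi> i j. grad f y $ i * grad f y $ j)) \<partial>std_gauss) *v \<theta>)
    = (\<theta> \<bullet> b)\<^sup>2 + (\<theta> v* S) \<bullet> (\<theta> v* S) - (\<theta> \<bullet> (\<theta> v* S))\<^sup>2 / 2"
proof -
  define \<kappa> where "\<kappa> = 1 - 1 / sqrt 2"
  define v where "v = \<theta> v* S"
  define w where "w = v - (\<kappa> * (\<theta> \<bullet> v)) *\<^sub>R \<theta>"
  define G where "G x = grad f (((\<theta> \<bullet> x) / sqrt 2) *\<^sub>R \<theta> + (x - (\<theta> \<bullet> x) *\<^sub>R \<theta>))" for x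
  have G: "G x = b + S *v (x - (\<kappa> * (\<theta> \<bullet> x)) *\<^sub>R \<theta>)" for x
    unfolding G_def grad \<kappa>_def by (simp add: algebra_simps)
  have G_component: "G x $ i = b $ i + (S $ i - (\<kappa> * (S $ i \<bullet> \<theta>)) *\<^sub>R \<theta>) \<bullet> x" for x i
    unfolding G by (simp add: matrix_vector_mul_component inner_diff_right inner_diff_left
        algebra_simps inner_commute[of \<theta>])
  have projected_G: "\<theta> \<bullet> G x = \<theta> \<bullet> b + w \<bullet> x" for x
    unfolding G w_def v_def
    by (simp add: inner_add_right dot_lmul_matrix[symmetric] inner_diff_right inner_diff_left
        algebra_simps inner_commute[of \<theta>])
  have integrable: "integrable std_gauss (\<lambda>x. \<chi> i j. G x $ i * G x $ j)"
    unfolding G_component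
    by (intro integrable_vec_lambda integrable.intros[OF std_gauss_affine_product])
  have "bounded_linear (\<lambda>N :: real^'n^'n. \<theta> \<bullet> (N *v \<theta>))"
    unfolding linear_conv_bounded_linear[symmetric]
    by (rule linearI) (simp_all add: matrix_vector_mult_add_rdistrib inner_add_right
        scaleR_matrix_vector_assoc[symmetric])
  then have "\<theta> \<bullet> ((\<integral>x. (\<chi> i j. G x $ i * G x $ j) \<partial>std_gauss) *v \<theta>)
      = (\<integral>x. \<theta> \<bullet> ((\<chi> i j. G x $ i * G x $ j) *v \<theta>) \<partial>std_gauss)"
    using integrable by (rule integral_bounded_linear[symmetric])
  also have "\<dots> = (\<integral>x. (\<theta> \<bullet> b + w \<bullet> x) * (\<theta> \<bullet> b + w \<bullet> x) \<partial>std_gauss)"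
    by (simp add: quadratic_form_outer_product projected_G power2_eq_square)
  also have "\<dots> = (\<theta> \<bullet> b)\<^sup>2 + w \<bullet> w"
    using has_bochner_integral_integral_eq[OF std_gauss_affine_product[of "\<theta> \<bullet> b" w "\<theta> \<bullet> b" w]]
    by (simp add: power2_eq_square)
  also have "\<dots> = (\<theta> \<bullet> b)\<^sup>2 + v \<bullet> v - (\<theta> \<bullet> v)\<^sup>2 / 2"
  proof -
    have "(1 / sqrt 2)\<^sup>2 = (1 / 2 :: real)"
      by (simp add: power_divide)
    then have "\<kappa>\<^sup>2 - 2 * \<kappa> = - 1 / 2"
      unfolding \<kappa>_def by (simp add: power2_eq_square algebra_simps)
    moreover have "w \<bullet> w = v \<bullet> v + (\<kappa>\<^sup>2 - 2 * \<kappa>) * (\<theta> \<bullet> v)\<^sup>2"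
      unfolding w_def inner_diff_left inner_diff_right inner_scaleR_left inner_scaleR_right \<theta>
      by (simp add: inner_commute[of v \<theta>] power2_eq_square algebra_simps)
    ultimately show ?thesis
      by simp
  qed
  finally show ?thesis
    unfolding v_def G_def Let_def .
qed

theorem proposition2:
  fixes f :: "real ^ 'n \<Rightarrow> real" and \<theta> :: "real ^ 'n"
  assumes "quadratic_fun f" and "norm \<theta> = 1"
  shows "sobol_proj f \<theta> =
    \<theta> \<bullet> ((\<integral>x. (let y = ((\<theta> \<bullet> x) / sqrt 2) *\<^sub>R \<theta> + (x - (\<theta> \<bullet> x) *\<^sub>R \<theta>)
                  in (\<chi> i j. grad f y $ i * grad f y $ j)) \<partial>std_gauss) *v \<theta>)"
proof -
  obtain c b and A :: "real^'n^'n" where f: "\<And>x. f x = c + b \<bullet> x + x \<bullet> (A *v x)"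
    using quadratic_fun_normal_form[OF assms(1)] by blast
  have \<theta>: "\<theta> \<bullet> \<theta> = 1"
    using assms(2) by (simp add: power2_norm_eq_inner[symmetric])
  show ?thesis
    using sobol_proj_eq_of_shift[OF quadratic_shift[OF f] \<theta>]
      projected_grad_moment_eq_of_affine_grad[OF grad_quadratic[OF f] \<theta>]
    by (rule trans[OF _ sym])
qed

end
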